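(* Let $n\ge1$ and $0<\epsilon\le 1$. Every symmetric pseudo-Boolean function $f:\{0,1\}^n\to\mathbb{R}$, with $f(x)=k_{|x|}$, can be represented uniquely in the form \[ f(x)=\sum_{i=0}^{n}\alpha_i\,\min\Bigl(0,\; i-\epsilon-\sum_{r=1}^n x_r\Bigr)\quad\text{for all }x\in\{0,1\}^n, \] and the coefficients are, for $j=0,1,\ldots,n$, \[ \alpha_j=-\sum_{i=0}^{j-2}\frac{(\epsilon-1)^{j-i-2}}{\epsilon^{j-i+1}}\,k_i+\Bigl(\frac1\epsilon+\frac1{\epsilon^2}\Bigr)k_{j-1}-\frac1\epsilon k_j, \] where the first sum is $0$ when $j<2$ and $k_{-1}:=0$.
   Context: A pseudo-Boolean function is a map $\{0,1\}^n\to\mathbb{R}$; it is symmetric if there are reals $k_0,\ldots,k_n$ with $f(x)=k_l$ whenever the Hamming weight $|x|=\sum_j x_j$ equals $l$. The expression $(\epsilon-1)^0$ is interpreted as $1$ (also when $\epsilon=1$). *)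

theory Defs
  imports Complex_Main "HOL-Library.FuncSet"
begin

definition cube :: "nat \<Rightarrow> (nat \<Rightarrow> nat) set" where
  "cube n = {1..n} \<rightarrow>\<^sub>E {0, 1}"

definition hweight :: "nat \<Rightarrow> (nat \<Rightarrow> nat) \<Rightarrow> nat" where
  "hweight n x = (\<Sum>r = 1..n. x r)"

definition alpha_coeff :: "real \<Rightarrow> (nat \<Rightarrow> real) \<Rightarrow> nat \<Rightarrow> real" where
  "alpha_coeff \<epsilon> k j =
     - (\<Sum>i\<in>{i. i + 2 \<le> j}. (\<epsilon> - 1) ^ (j - i - 2) / \<epsilon> ^ (j - i + 1) * k i)
     + (1 / \<epsilon> + 1 / \<epsilon>\<^sup>2) * (if j = 0 then 0 else k (j - 1))
     - (1 / \<epsilon>) * k j"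

end

theory Submission
  imports Defs
begin

text \<open>On a point of weight m the i-th summand vanishes for i > m (this is where
\<open>\<epsilon> \<le> 1\<close> is used) and equals \<open>\<alpha>\<^sub>i (i - \<epsilon> - m)\<close> for i \<le> m. So the representation
amounts to the triangular linear system \<open>T(m) = k\<^sub>m\<close>, m = 0..n, with T = \<open>hinge_value \<epsilon> \<alpha>\<close>,
whose diagonal entries are all \<open>-\<epsilon>\<close>; hence the solution is unique. Taking second differences of T gives
\<open>T(m+2) - 2T(m+1) + T(m) = -\<epsilon> \<alpha>\<^sub>m\<^sub>+\<^sub>2 + (\<epsilon> - 1) \<alpha>\<^sub>m\<^sub>+\<^sub>1\<close>, and the closed-form
coefficients satisfy exactly this recurrence with right-hand side the second differences of k.\<close>

definition hinge_value :: "real \<Rightarrow> (nat \<Rightarrow> real) \<Rightarrow> nat \<Rightarrow> real" where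
  "hinge_value e a m = (\<Sum>i = 0..m. a i * (real i - e - real m))"

lemma hinge_value_Suc:
  "hinge_value e a (Suc m) = hinge_value e a m - e * a (Suc m) - (\<Sum>i = 0..m. a i)"
proof -
  have "(\<Sum>i = 0..m. a i * (real i - e - real (Suc m)))
      = (\<Sum>i = 0..m. a i * (real i - e - real m) - a i)"
    by (intro sum.cong) (auto simp: algebra_simps)
  then have "(\<Sum>i = 0..m. a i * (real i - e - real (Suc m))) = hinge_value e a m - (\<Sum>i = 0..m. a i)"
    unfolding hinge_value_def by (simp add: sum_subtractf)
  then show ?thesis unfolding hinge_value_def[of e a "Suc m"] by (simp add: algebra_simps)
qed

lemma hinge_value_second_difference:
  "hinge_value e a (Suc (Suc m)) - 2 * hinge_value e a (Suc m) + hinge_value e a m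
     = - e * a (Suc (Suc m)) + (e - 1) * a (Suc m)"
  using hinge_value_Suc[of e a "Suc m"] hinge_value_Suc[of e a m] by (simp add: algebra_simps)

lemma hinge_value_cong:
  assumes "\<forall>i\<le>m. a i = b i"
  shows "hinge_value e a m = hinge_value e b m"
  unfolding hinge_value_def using assms by (intro sum.cong) auto

lemma hinge_value_eq_imp_eq:
  assumes "e \<noteq> 0" and "\<forall>m\<le>n. hinge_value e a m = hinge_value e b m"
  shows "\<forall>m\<le>n. a m = b m"
  using assms(2)
proof (induction n)
  case 0
  then show ?case using assms(1) by (simp add: hinge_value_def)
next
  case (Suc n)
  then have IH: "\<forall>j\<le>n. a j = b j" by simp
  have "(\<Sum>i = 0..n. a i) = (\<Sum>i = 0..n. b i)" using IH by (intro sum.cong) auto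
  moreover have "hinge_value e a n = hinge_value e b n" using IH by (rule hinge_value_cong)
  moreover have "hinge_value e a (Suc n) = hinge_value e b (Suc n)" using Suc.prems by simp
  ultimately have "a (Suc n) = b (Suc n)"
    using hinge_value_Suc[of e a n] hinge_value_Suc[of e b n] assms(1) by simp
  then show ?case using IH le_Suc_eq by auto
qed

definition alpha_tail :: "real \<Rightarrow> (nat \<Rightarrow> real) \<Rightarrow> nat \<Rightarrow> real" where
  "alpha_tail e k j = (\<Sum>i\<in>{i. i + 2 \<le> j}. (e - 1) ^ (j - i - 2) / e ^ (j - i + 1) * k i)"

lemma alpha_coeff_Suc:
  "alpha_coeff e k (Suc j) = - alpha_tail e k (Suc j) + (1 / e + 1 / e\<^sup>2) * k j - k (Suc j) / e"
  unfolding alpha_coeff_def alpha_tail_def by simp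

lemma alpha_tail_Suc_Suc:
  assumes "e \<noteq> 0"
  shows "e * alpha_tail e k (Suc (Suc m)) = (e - 1) * alpha_tail e k (Suc m) + k m / e\<^sup>2"
proof -
  define F where "F i = (e - 1) ^ (Suc (Suc m) - i - 2) / e ^ (Suc (Suc m) - i + 1) * k i" for i
  have shift: "F i = (e - 1) / e * ((e - 1) ^ (Suc m - i - 2) / e ^ (Suc m - i + 1) * k i)"
    if "i < m" for i
  proof -
    have "Suc (Suc m) - i - 2 = Suc (Suc m - i - 2)" "Suc (Suc m) - i + 1 = Suc (Suc m - i + 1)"
      using that by auto
    then show ?thesis unfolding F_def by simp
  qed
  have "alpha_tail e k (Suc (Suc m)) = (\<Sum>i\<in>insert m {..<m}. F i)"
    unfolding alpha_tail_def F_def by (rule sum.cong) auto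
  also have "\<dots> = F m + (\<Sum>i<m. F i)" by (rule sum.insert) simp_all
  also have "(\<Sum>i<m. F i) = (e - 1) / e * alpha_tail e k (Suc m)"
    unfolding alpha_tail_def sum_distrib_left by (rule sum.cong) (auto simp: shift)
  finally have "e * alpha_tail e k (Suc (Suc m)) = e * F m + e * ((e - 1) / e) * alpha_tail e k (Suc m)"
    by (simp add: distrib_left)
  then show ?thesis using assms by (simp add: F_def power3_eq_cube power2_eq_square)
qed

lemma alpha_coeff_recurrence:
  assumes "e \<noteq> 0"
  shows "- e * alpha_coeff e k (Suc (Suc m)) + (e - 1) * alpha_coeff e k (Suc m)
           = k (Suc (Suc m)) - 2 * k (Suc m) + k m"
proof -
  have "- e * alpha_coeff e k (Suc (Suc m)) + (e - 1) * alpha_coeff e k (Suc m)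
      = (e * alpha_tail e k (Suc (Suc m)) - (e - 1) * alpha_tail e k (Suc m))
        - e * ((1 / e + 1 / e\<^sup>2) * k (Suc m) - k (Suc (Suc m)) / e)
        + (e - 1) * ((1 / e + 1 / e\<^sup>2) * k m - k (Suc m) / e)"
    by (simp add: alpha_coeff_Suc algebra_simps)
  also have "\<dots> = k m / e\<^sup>2
        - e * ((1 / e + 1 / e\<^sup>2) * k (Suc m) - k (Suc (Suc m)) / e)
        + (e - 1) * ((1 / e + 1 / e\<^sup>2) * k m - k (Suc m) / e)"
    using alpha_tail_Suc_Suc[OF assms, of k m] by simp
  also have "\<dots> = k (Suc (Suc m)) - 2 * k (Suc m) + k m"
    using assms by (simp add: field_simps power2_eq_square)
  finally show ?thesis .
qed

lemma hinge_value_alpha_coeff: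
  assumes "e \<noteq> 0"
  shows "hinge_value e (alpha_coeff e k) m = k m"
proof -
  have "hinge_value e (alpha_coeff e k) m = k m
      \<and> hinge_value e (alpha_coeff e k) (Suc m) = k (Suc m)"
  proof (induction m)
    case 0
    have "alpha_tail e k (Suc 0) = 0" "alpha_coeff e k 0 = - k 0 / e"
      by (simp_all add: alpha_tail_def alpha_coeff_def)
    then show ?case
      using assms by (simp add: hinge_value_def alpha_coeff_Suc field_simps power2_eq_square)
  next
    case (Suc m)
    then show ?case
      using hinge_value_second_difference[of e "alpha_coeff e k" m] alpha_coeff_recurrence[OF assms, of k m]
      by simp
  qed
  then show ?thesis ..
qed

lemma sum_min_hinge_eq_hinge_value:
  assumes "m \<le> n" and "0 \<le> e" and "e \<le> 1"
  shows "(\<Sum>i = 0..n. a i * min 0 (real i - e - real m)) = hinge_value e a m"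
proof -
  have "(\<Sum>i = 0..n. a i * min 0 (real i - e - real m))
      = (\<Sum>i = 0..n. if i \<in> {..m} then a i * (real i - e - real m) else 0)"
    using assms by (intro sum.cong refl) (auto simp: min_def)
  also have "\<dots> = (\<Sum>i \<in> {0..n} \<inter> {..m}. a i * (real i - e - real m))"
    by (rule sum.inter_restrict[symmetric]) simp
  also have "{0..n} \<inter> {..m} = {0..m}" using assms(1) by auto
  finally show ?thesis unfolding hinge_value_def .
qed

lemma hweight_le:
  assumes "x \<in> cube n"
  shows "hweight n x \<le> n"
proof -
  have "hweight n x \<le> (\<Sum>r = 1..n. 1)"
    unfolding hweight_def using assms unfolding cube_def by (intro sum_mono) (force simp: PiE_iff)
  then show ?thesis by simp
qed

lemma ex_cube_hweight_eq:
  assumes "m \<le> n"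
  shows "\<exists>x\<in>cube n. hweight n x = m"
proof
  let ?x = "\<lambda>r\<in>{1..n}. if r \<le> m then 1 else (0::nat)"
  show "?x \<in> cube n" unfolding cube_def by auto
  have "hweight n ?x = (\<Sum>r = 1..n. if r \<in> {..m} then 1 else 0)"
    unfolding hweight_def by (intro sum.cong) auto
  also have "\<dots> = (\<Sum>r \<in> {1..n} \<inter> {..m}. 1)" by (rule sum.inter_restrict[symmetric]) simp
  also have "{1..n} \<inter> {..m} = {1..m}" using assms by auto
  also have "(\<Sum>r = 1..m. 1) = m" by simp
  finally show "hweight n ?x = m" .
qed

lemma ball_cube_hweight_iff: "(\<forall>x\<in>cube n. P (hweight n x)) \<longleftrightarrow> (\<forall>m\<le>n. P m)"
  using hweight_le ex_cube_hweight_eq by blast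

theorem theorem2:
  fixes n :: nat and \<epsilon> :: real and f :: "(nat \<Rightarrow> nat) \<Rightarrow> real" and k :: "nat \<Rightarrow> real"
  assumes "n \<ge> 1" and "0 < \<epsilon>" and "\<epsilon> \<le> 1"
    and sym: "\<forall>x\<in>cube n. f x = k (hweight n x)"
  shows "\<forall>\<alpha> :: nat \<Rightarrow> real.
           (\<forall>x\<in>cube n. f x = (\<Sum>i = 0..n. \<alpha> i * min 0 (real i - \<epsilon> - real (hweight n x))))
           \<longleftrightarrow> (\<forall>j \<le> n. \<alpha> j = alpha_coeff \<epsilon> k j)"
proof
  fix \<alpha> :: "nat \<Rightarrow> real"
  have \<epsilon>: "\<epsilon> \<noteq> 0" "0 \<le> \<epsilon>" using assms(2) by simp_all
  have value_at_x: "(\<Sum>i = 0..n. \<alpha> i * min 0 (real i - \<epsilon> - real (hweight n x)))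
      = hinge_value \<epsilon> \<alpha> (hweight n x)" if "x \<in> cube n" for x
    using sum_min_hinge_eq_hinge_value[OF hweight_le[OF that] \<epsilon>(2) assms(3)] .
  have "(\<forall>x\<in>cube n. f x = (\<Sum>i = 0..n. \<alpha> i * min 0 (real i - \<epsilon> - real (hweight n x))))
      \<longleftrightarrow> (\<forall>x\<in>cube n. k (hweight n x) = hinge_value \<epsilon> \<alpha> (hweight n x))"
    using sym value_at_x by (intro ball_cong) auto
  also have "\<dots> \<longleftrightarrow> (\<forall>m\<le>n. k m = hinge_value \<epsilon> \<alpha> m)"
    by (rule ball_cube_hweight_iff)
  also have "\<dots> \<longleftrightarrow> (\<forall>m\<le>n. hinge_value \<epsilon> \<alpha> m = hinge_value \<epsilon> (alpha_coeff \<epsilon> k) m)"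
    by (simp add: hinge_value_alpha_coeff[OF \<epsilon>(1)] eq_commute)
  also have "\<dots> \<longleftrightarrow> (\<forall>j \<le> n. \<alpha> j = alpha_coeff \<epsilon> k j)"
    using hinge_value_eq_imp_eq[OF \<epsilon>(1)] by (auto intro: hinge_value_cong)
  finally show "(\<forall>x\<in>cube n. f x = (\<Sum>i = 0..n. \<alpha> i * min 0 (real i - \<epsilon> - real (hweight n x))))
           \<longleftrightarrow> (\<forall>j \<le> n. \<alpha> j = alpha_coeff \<epsilon> k j)" .
qed

end
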